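(* Let $x$ be a half-integer square point with support graph $G_x$, let $H$ be a Hamiltonian cycle of $G_x$ containing all 1-edges of $x$ and two opposite half-edges from each half-square, and let $G=(V,E)$ be the 4-regular graph obtained from $G_x$ by replacing each path of 1-edges by a single 1-edge and contracting each half-square into a vertex. Let $\alpha>0$. If $P(G,\alpha)$ holds, then the vector $r^{\alpha,x}$ can be written as a convex combination of 2-edge-connected multigraphs of $G_x$.
   Context: $\mathrm{LP}(G)$ is the set of $x\in\mathbb{R}^E$ with $0\le x\le2$ and $x(\delta(S))\ge2$ for all $\emptyset\subsetneq S\subsetneq V$. The support graph $G_x$ has edge set $\{e:x_e>0\}$; 1-edges have $x_e=1$, half-edges $x_e=\frac12$. A half-integer Boyd-Carr point is a point $x\in\mathrm{LP}(G)$ with entries in $\{0,\frac12,1\}$ such that $G_x$ is cubic and 3-edge-connected, exactly one 1-edge is incident to each vertex, and the half-edges form vertex-disjoint 4-cycles (half-squares); a half-integer square point is obtained from such a point by replacing each 1-edge by a path of 1-edges of arbitrary length. Let $A$ be the set of 1-edges of $G_x$, $B$ the half-edges in $H$, and $C$ the half-edges not in $H$. For $\alpha>0$, $r^{\alpha,x}\in\mathbb{R}^{E(G_x)}$ has $r^{\alpha,x}_e=1+\alpha$ for $e\in A$, $r^{\alpha,x}_e=\frac12$ for $e\in B$, and $r^{\alpha,x}_e=1-\alpha$ for $e\in C$. $P(G,\alpha)$ holds if the everywhere $\alpha$ vector for $G$ (all entries $\alpha$) can be written as $\sum_{i=1}^k\lambda_i\chi^{M_i}$ with $\lambda_i\ge0$,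 $\sum_i\lambda_i=1$, where each $M_i$ is a matching of $G$ such that $(V,E\setminus M_i)$ is 2-vertex-connected. A 2-edge-connected multigraph of $G_x$ is a multiset of edges of $G_x$ forming a spanning 2-edge-connected multigraph; its incidence vector counts copies of each edge, and "written as a convex combination" means equal to a convex combination of such incidence vectors. *)

theory Defs
  imports Complex_Main
begin

text \<open>Finite multigraphs are given by a vertex set V, an edge set E (edges are
abstract elements, so parallel edges are allowed) and an endpoint map ends.\<close>

definition wf_graph :: "'v set \<Rightarrow> 'e set \<Rightarrow> ('e \<Rightarrow> 'v set) \<Rightarrow> bool" where
  "wf_graph V E ends \<longleftrightarrow> finite V \<and> finite E \<and>
     (\<forall>e\<in>E. ends e \<subseteq> V \<and> card (ends e) = 2)"

definition cut :: "'e set \<Rightarrow> ('e \<Rightarrow> 'v set) \<Rightarrow> 'v set \<Rightarrow> 'e set" where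
  "cut E ends S = {e\<in>E. card (ends e \<inter> S) = 1}"

definition in_LP :: "'v set \<Rightarrow> 'e set \<Rightarrow> ('e \<Rightarrow> 'v set) \<Rightarrow> ('e \<Rightarrow> real) \<Rightarrow> bool" where
  "in_LP V E ends x \<longleftrightarrow> (\<forall>e\<in>E. 0 \<le> x e \<and> x e \<le> 2) \<and>
     (\<forall>S. S \<noteq> {} \<and> S \<subset> V \<longrightarrow> sum x (cut E ends S) \<ge> 2)"

definition degree :: "'e set \<Rightarrow> ('e \<Rightarrow> 'v set) \<Rightarrow> 'v \<Rightarrow> nat" where
  "degree E ends v = card {e\<in>E. v \<in> ends e}"

definition k_edge_connected :: "nat \<Rightarrow> 'v set \<Rightarrow> 'e set \<Rightarrow> ('e \<Rightarrow> 'v set) \<Rightarrow> bool" where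
  "k_edge_connected k V E ends \<longleftrightarrow>
     (\<forall>S. S \<noteq> {} \<and> S \<subset> V \<longrightarrow> card (cut E ends S) \<ge> k)"

definition four_cycle :: "('e \<Rightarrow> 'v set) \<Rightarrow> 'e set \<Rightarrow> bool" where
  "four_cycle ends C \<longleftrightarrow> (\<exists>a b c d e1 e2 e3 e4.
     distinct [a,b,c,d] \<and> distinct [e1,e2,e3,e4] \<and> C = {e1,e2,e3,e4} \<and>
     ends e1 = {a,b} \<and> ends e2 = {b,c} \<and> ends e3 = {c,d} \<and> ends e4 = {d,a})"

definition verts :: "('e \<Rightarrow> 'v set) \<Rightarrow> 'e set \<Rightarrow> 'v set" where
  "verts ends C = \<Union>(ends ` C)"

definition half_squares :: "'e set \<Rightarrow> ('e \<Rightarrow> 'v set) \<Rightarrow> ('e \<Rightarrow> real) \<Rightarrow> 'e set set" where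
  "half_squares E ends x = {C. C \<subseteq> {e\<in>E. x e = 1/2} \<and> four_cycle ends C}"

text \<open>Half-integer Boyd-Carr point; E is the edge set of the support graph G_x.\<close>
definition boyd_carr_point :: "'v set \<Rightarrow> 'e set \<Rightarrow> ('e \<Rightarrow> 'v set) \<Rightarrow> ('e \<Rightarrow> real) \<Rightarrow> bool" where
  "boyd_carr_point V E ends x \<longleftrightarrow> wf_graph V E ends \<and>
     (\<forall>e\<in>E. x e = 1/2 \<or> x e = 1) \<and>
     in_LP V E ends x \<and>
     (\<forall>v\<in>V. degree E ends v = 3) \<and>
     k_edge_connected 3 V E ends \<and>
     (\<forall>v\<in>V. card {e\<in>E. v \<in> ends e \<and> x e = 1} = 1) \<and>
     \<Union>(half_squares E ends x) = {e\<in>E. x e = 1/2} \<and>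
     (\<forall>C\<in>half_squares E ends x. \<forall>D\<in>half_squares E ends x.
        C \<noteq> D \<longrightarrow> verts ends C \<inter> verts ends D = {})"

definition is_path :: "('e \<Rightarrow> 'v set) \<Rightarrow> 'v list \<Rightarrow> 'e list \<Rightarrow> bool" where
  "is_path ends vs es \<longleftrightarrow> length vs = Suc (length es) \<and> es \<noteq> [] \<and>
     distinct vs \<and> distinct es \<and>
     (\<forall>i<length es. ends (es ! i) = {vs ! i, vs ! Suc i})"

definition inner :: "'v list \<Rightarrow> 'v set" where
  "inner vs = set (butlast (tl vs))"

text \<open>(V,E,ends,x) is obtained from the Boyd-Carr point (V0,E0,ends0,x0) by
replacing each 1-edge f by a path pe f (through vertices pv f) of 1-edges;
the half-edges are kept unchanged.\<close>
definition subdivision ::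
  "'v set \<Rightarrow> 'e set \<Rightarrow> ('e \<Rightarrow> 'v set) \<Rightarrow> ('e \<Rightarrow> real) \<Rightarrow>
   'v set \<Rightarrow> 'e set \<Rightarrow> ('e \<Rightarrow> 'v set) \<Rightarrow> ('e \<Rightarrow> real) \<Rightarrow> bool" where
  "subdivision V0 E0 ends0 x0 V E ends x \<longleftrightarrow>
     wf_graph V E ends \<and> (\<forall>e\<in>E. x e = 1/2 \<or> x e = 1) \<and> V0 \<subseteq> V \<and>
     {e\<in>E. x e = 1/2} = {e\<in>E0. x0 e = 1/2} \<and>
     (\<forall>e\<in>E0. x0 e = 1/2 \<longrightarrow> ends e = ends0 e) \<and>
     (\<exists>pv pe.
        (\<forall>f\<in>E0. x0 f = 1 \<longrightarrow>
            is_path ends (pv f) (pe f) \<and> {hd (pv f), last (pv f)} = ends0 f \<and>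
            set (pe f) \<subseteq> E \<and> (\<forall>e\<in>set (pe f). x e = 1) \<and>
            inner (pv f) \<inter> V0 = {}) \<and>
        (\<forall>f\<in>E0. \<forall>g\<in>E0. x0 f = 1 \<and> x0 g = 1 \<and> f \<noteq> g \<longrightarrow>
            set (pe f) \<inter> set (pe g) = {} \<and> inner (pv f) \<inter> inner (pv g) = {}) \<and>
        {e\<in>E. x e = 1} = (\<Union>f\<in>{f\<in>E0. x0 f = 1}. set (pe f)) \<and>
        V = V0 \<union> (\<Union>f\<in>{f\<in>E0. x0 f = 1}. inner (pv f)))"

definition half_integer_square_point ::
  "'v set \<Rightarrow> 'e set \<Rightarrow> ('e \<Rightarrow> 'v set) \<Rightarrow> ('e \<Rightarrow> real) \<Rightarrow> bool" where
  "half_integer_square_point V E ends x \<longleftrightarrow>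
     (\<exists>V0 E0 ends0 x0. boyd_carr_point V0 E0 ends0 x0 \<and>
        subdivision V0 E0 ends0 x0 V E ends x)"

definition hamiltonian_cycle :: "'v set \<Rightarrow> 'e set \<Rightarrow> ('e \<Rightarrow> 'v set) \<Rightarrow> 'e set \<Rightarrow> bool" where
  "hamiltonian_cycle V E ends H \<longleftrightarrow> H \<subseteq> E \<and>
     (\<exists>vs es. length vs \<ge> 3 \<and> distinct vs \<and> set vs = V \<and>
        length es = length vs \<and> distinct es \<and> set es = H \<and>
        (\<forall>i<length vs. ends (es ! i) = {vs ! i, vs ! ((i + 1) mod length vs)}))"

text \<open>Contracted graph G: vertices are the vertex sets of the half-squares,
edges are the 1-edges of the Boyd-Carr point, an edge joining the
half-squares containing its endpoints.\<close>
definition contr_V :: "'e set \<Rightarrow> ('e \<Rightarrow> 'v set) \<Rightarrow> ('e \<Rightarrow> real) \<Rightarrow> 'v set set" where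
  "contr_V E ends x = verts ends ` half_squares E ends x"

definition contr_E :: "'e set \<Rightarrow> ('e \<Rightarrow> real) \<Rightarrow> 'e set" where
  "contr_E E x = {f\<in>E. x f = 1}"

definition contr_ends :: "'e set \<Rightarrow> ('e \<Rightarrow> 'v set) \<Rightarrow> ('e \<Rightarrow> real) \<Rightarrow> 'e \<Rightarrow> 'v set set" where
  "contr_ends E ends x f = {Q\<in>contr_V E ends x. Q \<inter> ends f \<noteq> {}}"

definition matching :: "'e set \<Rightarrow> ('e \<Rightarrow> 'w set) \<Rightarrow> 'e set \<Rightarrow> bool" where
  "matching E ends M \<longleftrightarrow> M \<subseteq> E \<and> (\<forall>e\<in>M. card (ends e) = 2) \<and>
     (\<forall>e\<in>M. \<forall>f\<in>M. e \<noteq> f \<longrightarrow> ends e \<inter> ends f = {})"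

definition adj :: "'e set \<Rightarrow> ('e \<Rightarrow> 'w set) \<Rightarrow> ('w \<times> 'w) set" where
  "adj F ends = {(u,v). \<exists>e\<in>F. ends e = {u,v}}"

definition connected_graph :: "'w set \<Rightarrow> 'e set \<Rightarrow> ('e \<Rightarrow> 'w set) \<Rightarrow> bool" where
  "connected_graph V F ends \<longleftrightarrow> (\<forall>u\<in>V. \<forall>v\<in>V. (u,v) \<in> (adj F ends)\<^sup>*)"

text \<open>2-vertex-connected (Diestel): more than 2 vertices, and connected after
deleting any at most one vertex.\<close>
definition two_vertex_connected :: "'w set \<Rightarrow> 'e set \<Rightarrow> ('e \<Rightarrow> 'w set) \<Rightarrow> bool" where
  "two_vertex_connected V F ends \<longleftrightarrow> card V > 2 \<and> connected_graph V F ends \<and>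
     (\<forall>v\<in>V. connected_graph (V - {v}) {e\<in>F. v \<notin> ends e} ends)"

definition P_prop :: "'w set \<Rightarrow> 'e set \<Rightarrow> ('e \<Rightarrow> 'w set) \<Rightarrow> real \<Rightarrow> bool" where
  "P_prop V E ends \<alpha> \<longleftrightarrow> (\<exists>k (lam :: nat \<Rightarrow> real) (M :: nat \<Rightarrow> 'e set).
     (\<forall>i<k. lam i \<ge> 0 \<and> matching E ends (M i) \<and> two_vertex_connected V (E - M i) ends) \<and>
     (\<Sum>i<k. lam i) = 1 \<and>
     (\<forall>e\<in>E. (\<Sum>i<k. lam i * (if e \<in> M i then 1 else 0)) = \<alpha>))"

definition two_ec_multigraph :: "'v set \<Rightarrow> 'e set \<Rightarrow> ('e \<Rightarrow> 'v set) \<Rightarrow> ('e \<Rightarrow> nat) \<Rightarrow> bool" where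
  "two_ec_multigraph V E ends m \<longleftrightarrow> (\<forall>e. e \<notin> E \<longrightarrow> m e = 0) \<and>
     (\<forall>S. S \<noteq> {} \<and> S \<subset> V \<longrightarrow> (\<Sum>e\<in>cut E ends S. m e) \<ge> 2)"

definition r_vec :: "real \<Rightarrow> ('e \<Rightarrow> real) \<Rightarrow> 'e set \<Rightarrow> 'e \<Rightarrow> real" where
  "r_vec \<alpha> x H e = (if x e = 1 then 1 + \<alpha> else if e \<in> H then 1/2 else 1 - \<alpha>)"

definition convex_comb_2ec :: "'v set \<Rightarrow> 'e set \<Rightarrow> ('e \<Rightarrow> 'v set) \<Rightarrow> ('e \<Rightarrow> real) \<Rightarrow> bool" where
  "convex_comb_2ec V E ends y \<longleftrightarrow> (\<exists>k (lam :: nat \<Rightarrow> real) (m :: nat \<Rightarrow> 'e \<Rightarrow> nat).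
     (\<forall>i<k. lam i \<ge> 0 \<and> two_ec_multigraph V E ends (m i)) \<and>
     (\<Sum>i<k. lam i) = 1 \<and>
     (\<forall>e\<in>E. (\<Sum>i<k. lam i * real (m i e)) = y e))"

end

theory Submission
  imports Defs
begin

text \<open>Let the matchings M of G, with weights, be as in P(G,\<alpha>). For every M and every bit t
  build a multigraph on G_x: the 1-edges on the path of an edge of M are doubled, the other
  1-edges are taken once, and each half-square keeps two or three of its half-edges, depending
  on how it meets M. The support is connected because walks in G - M lift to it, and every
  edge of multiplicity one lies on a cycle: leave its half-square W through two unmatched
  1-edges and come back through G - M - W, which is connected as G - M is 2-vertex-connected.
  Hence each multigraph is 2-edge-connected. Averaging over t yields 1/2 on the half-edges of H,
  1 minus half the number of matched ends on the other half-edges, and 1 or 2 on a 1-edge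
  according to whether its edge of G lies in M; averaging over M, where each edge of G lies
  in M with weight \<alpha>, yields r^(\<alpha>,x).\<close>

section \<open>Reachability and 2-edge-connected multigraphs\<close>

lemma adj_sym: "(u,v) \<in> adj F ends \<Longrightarrow> (v,u) \<in> adj F ends"
  unfolding adj_def by (auto simp: insert_commute)

lemma rtrancl_adj_sym: "(u,v) \<in> (adj F ends)\<^sup>* \<Longrightarrow> (v,u) \<in> (adj F ends)\<^sup>*"
proof (induction rule: rtrancl_induct)
  case (step y z)
  then show ?case using adj_sym by (meson converse_rtrancl_into_rtrancl)
qed simp

lemma adj_mono: "F \<subseteq> F' \<Longrightarrow> adj F ends \<subseteq> adj F' ends"
  unfolding adj_def by auto

lemma rtrancl_adj_mono: "(u,v) \<in> (adj F ends)\<^sup>* \<Longrightarrow> F \<subseteq> F' \<Longrightarrow> (u,v) \<in> (adj F' ends)\<^sup>*"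
  using rtrancl_mono[OF adj_mono] by blast

lemma rtrancl_adj_edge: "e \<in> F \<Longrightarrow> ends e = {u,v} \<Longrightarrow> (u,v) \<in> (adj F ends)\<^sup>*"
  unfolding adj_def by auto

lemma rtrancl_adj_doubleton:
  assumes "{a,b} = {u,v}" "(u,v) \<in> (adj F ends)\<^sup>*"
  shows "(a,b) \<in> (adj F ends)\<^sup>*"
  using assms rtrancl_adj_sym by (metis doubleton_eq_iff)

lemma rtrancl_adj_crossing_edge:
  assumes "(u,w) \<in> (adj F ends)\<^sup>*" "u \<in> S" "w \<notin> S"
  shows "\<exists>e\<in>F. \<exists>a b. ends e = {a,b} \<and> a \<in> S \<and> b \<notin> S"
  using assms
proof (induction rule: rtrancl_induct)
  case (step y z)
  then show ?case unfolding adj_def by (cases "y \<in> S") auto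
qed simp

lemma two_ec_multigraphI:
  fixes m :: "'e \<Rightarrow> nat"
  assumes wf: "wf_graph V E ends"
    and zero: "\<And>e. e \<notin> E \<Longrightarrow> m e = 0"
    and conn: "\<And>u w. u \<in> V \<Longrightarrow> w \<in> V \<Longrightarrow> (u,w) \<in> (adj {e\<in>E. m e \<ge> 1} ends)\<^sup>*"
    and cyc: "\<And>e a b. e \<in> E \<Longrightarrow> m e = 1 \<Longrightarrow> ends e = {a,b} \<Longrightarrow>
                 (a,b) \<in> (adj ({e\<in>E. m e \<ge> 1} - {e}) ends)\<^sup>*"
  shows "two_ec_multigraph V E ends m"
  unfolding two_ec_multigraph_def
proof (intro conjI allI impI)
  fix e assume "e \<notin> E" then show "m e = 0" using zero by auto
next
  fix S assume S: "S \<noteq> {} \<and> S \<subset> V"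
  let ?F = "{e\<in>E. m e \<ge> 1}"
  have fincut: "finite (cut E ends S)" using wf unfolding wf_graph_def cut_def by auto
  have incut: "e \<in> cut E ends S" if "e \<in> E" "ends e = {a,b}" "a \<in> S" "b \<notin> S" for e a b
  proof -
    have "ends e \<inter> S = {a}" using that by auto
    then show ?thesis using that unfolding cut_def by auto
  qed
  obtain u w where uw: "u \<in> S" "w \<in> V" "w \<notin> S" using S by auto
  have "u \<in> V" using uw S by auto
  then obtain e a b where e: "e \<in> ?F" "ends e = {a,b}" "a \<in> S" "b \<notin> S"
    using rtrancl_adj_crossing_edge[OF conn uw(1,3)] uw(2) by blast
  have ec: "e \<in> cut E ends S" using incut e by auto
  show "(\<Sum>e\<in>cut E ends S. m e) \<ge> 2"
  proof (cases "m e \<ge> 2")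
    case True
    then show ?thesis using member_le_sum[OF ec _ fincut, of m] by auto
  next
    case False
    then have m1: "m e = 1" using e by auto
    obtain e' a' b' where e': "e' \<in> ?F - {e}" "ends e' = {a',b'}" "a' \<in> S" "b' \<notin> S"
      using rtrancl_adj_crossing_edge[OF cyc[OF _ m1 e(2)] e(3,4)] e by blast
    have "e' \<in> cut E ends S" using incut e' by blast
    then have "m e + m e' = (\<Sum>e\<in>{e,e'}. m e)" using e' by auto
    also have "\<dots> \<le> (\<Sum>e\<in>cut E ends S. m e)"
      using ec \<open>e' \<in> cut E ends S\<close> by (intro sum_mono2[OF fincut]) auto
    finally show ?thesis using m1 e' by auto
  qed
qed

lemma convex_comb_2ec_of_pairs:
  fixes lam :: "nat \<Rightarrow> real" and m :: "nat \<Rightarrow> bool \<Rightarrow> 'e \<Rightarrow> nat"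
  assumes m: "\<And>i t. i < k \<Longrightarrow> two_ec_multigraph V E ends (m i t)"
    and lam: "\<And>i. i < k \<Longrightarrow> lam i \<ge> 0" "(\<Sum>i<k. lam i) = 1"
    and y: "\<And>e. e \<in> E \<Longrightarrow> (\<Sum>i<k. lam i * (real (m i True e) + real (m i False e)) / 2) = y e"
  shows "convex_comb_2ec V E ends y"
  unfolding convex_comb_2ec_def
proof (intro exI conjI allI impI ballI)
  define lam' where "lam' j = lam (j div 2) / 2" for j
  define m' where "m' j = m (j div 2) (even j)" for j
  have pairs: "(\<Sum>j<2*k. f j) = (\<Sum>i<k. f (2*i) + f (2*i+1))" for f :: "nat \<Rightarrow> real"
    using sum_split_even_odd[of f f k] by (simp add: sum.distrib)
  show "lam' j \<ge> 0" "two_ec_multigraph V E ends (m' j)" if "j < 2*k" for j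
    using that lam(1) m unfolding lam'_def m'_def by auto
  show "(\<Sum>j<2*k. lam' j) = 1"
    unfolding pairs lam'_def using lam(2) by simp
  show "(\<Sum>j<2*k. lam' j * real (m' j e)) = y e" if "e \<in> E" for e
    unfolding pairs lam'_def m'_def using y[OF that]
    by (simp add: field_simps sum_divide_distrib)
qed

lemma P_prop_card_ends:
  assumes "P_prop V E ends \<alpha>" "\<alpha> > 0" "e \<in> E"
  shows "card (ends e) = 2"
proof -
  obtain k :: nat and lam M
    where M: "\<forall>i<k. lam i \<ge> 0 \<and> matching E ends (M i) \<and> two_vertex_connected V (E - M i) ends"
    and "(\<Sum>i<k. lam i) = 1"
    and freq: "\<forall>e\<in>E. (\<Sum>i<k. lam i * (if e \<in> M i then 1 else 0)) = \<alpha>"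
    using assms(1) unfolding P_prop_def by blast
  have "\<exists>i<k. e \<in> M i"
  proof (rule ccontr)
    assume "\<not> (\<exists>i<k. e \<in> M i)"
    then have "(\<Sum>i<k. lam i * (if e \<in> M i then 1 else 0)) = 0" by simp
    then show False using freq assms(2,3) by simp
  qed
  then show ?thesis using M unfolding matching_def by blast
qed

section \<open>Paths and four-cycles\<close>

lemma is_path_cong: "(\<And>e. e \<in> set es \<Longrightarrow> f e = g e) \<Longrightarrow> is_path f vs es \<Longrightarrow> is_path g vs es"
  unfolding is_path_def by (metis nth_mem)

lemma is_path_hd_last:
  assumes "is_path ends vs es"
  shows "hd vs \<in> set vs" "last vs \<in> set vs"
proof -
  have "vs \<noteq> []" using assms unfolding is_path_def by auto
  then show "hd vs \<in> set vs" "last vs \<in> set vs" by simp_all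
qed

lemma is_path_two_edges:
  "distinct [v0,v1,v2] \<Longrightarrow> f0 \<noteq> f1 \<Longrightarrow> en f0 = {v0,v1} \<Longrightarrow> en f1 = {v1,v2} \<Longrightarrow>
   is_path en [v0,v1,v2] [f0,f1]"
  unfolding is_path_def by (auto simp: less_Suc_eq numeral_2_eq_2)

lemma is_path_three_edges:
  "distinct [v0,v1,v2,v3] \<Longrightarrow> distinct [f0,f1,f2] \<Longrightarrow>
   en f0 = {v0,v1} \<Longrightarrow> en f1 = {v1,v2} \<Longrightarrow> en f2 = {v2,v3} \<Longrightarrow>
   is_path en [v0,v1,v2,v3] [f0,f1,f2]"
  unfolding is_path_def by (auto simp: less_Suc_eq numeral_3_eq_3)

lemma is_path_segment_rtrancl:
  assumes "is_path ends vs es" "i \<le> j" "j < length vs"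
  shows "(vs!i, vs!j) \<in> (adj ((!) es ` {i..<j}) ends)\<^sup>*"
  using assms(2,3)
proof (induction j)
  case 0 then show ?case by simp
next
  case (Suc j)
  show ?case
  proof (cases "i = Suc j")
    case False
    then have ij: "i \<le> j" using Suc.prems by auto
    have "(vs!i, vs!j) \<in> (adj ((!) es ` {i..<Suc j}) ends)\<^sup>*"
      using Suc.prems ij by (intro rtrancl_adj_mono[OF Suc.IH]) auto
    moreover have "(vs!j, vs!Suc j) \<in> (adj ((!) es ` {i..<Suc j}) ends)\<^sup>*"
      using assms(1) Suc.prems ij unfolding is_path_def by (intro rtrancl_adj_edge) auto
    ultimately show ?thesis by (rule rtrancl_trans)
  qed simp
qed

lemma is_path_rtrancl:
  assumes "is_path ends vs es" "set es \<subseteq> F" "u \<in> set vs" "w \<in> set vs"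
  shows "(u,w) \<in> (adj F ends)\<^sup>*"
proof -
  have from_hd: "(vs!0, v) \<in> (adj F ends)\<^sup>*" if vin: "v \<in> set vs" for v
  proof -
    obtain i where i: "i < length vs" "v = vs!i" using vin unfolding in_set_conv_nth by blast
    have sub: "(!) es ` {0..<i} \<subseteq> F"
    proof (rule image_subsetI)
      fix l assume "l \<in> {0..<i}"
      then have "l < length es" using i assms(1) unfolding is_path_def by auto
      then show "es!l \<in> F" using assms(2) nth_mem by blast
    qed
    have "(vs!0, vs!i) \<in> (adj ((!) es ` {0..<i}) ends)\<^sup>*"
      using is_path_segment_rtrancl[OF assms(1) _ i(1)] by simp
    then show ?thesis using i(2) rtrancl_adj_mono[OF _ sub] by simp
  qed
  show ?thesis
    using rtrancl_trans[OF rtrancl_adj_sym[OF from_hd[OF assms(3)]] from_hd[OF assms(4)]] .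
qed

lemma is_path_edge_on_cycle:
  assumes p: "is_path ends vs es" and e: "e \<in> set es" "ends e = {a,b}"
    and F: "set es - {e} \<subseteq> F" and hd_last: "(hd vs, last vs) \<in> (adj F ends)\<^sup>*"
  shows "(a,b) \<in> (adj F ends)\<^sup>*"
proof -
  obtain j where j: "j < length es" "e = es!j" using e(1) unfolding in_set_conv_nth by blast
  have len: "length vs = Suc (length es)" "distinct es" using p unfolding is_path_def by auto
  have ej: "ends e = {vs!j, vs!Suc j}" using p j unfolding is_path_def by auto
  have avoid: "(!) es ` I \<subseteq> F" if "I \<subseteq> {..<length es}" "j \<notin> I" for I
  proof (rule image_subsetI)
    fix i assume "i \<in> I"
    then have "es!i \<in> set es - {es!j}"
      using that j(1) nth_eq_iff_index_eq[OF len(2)] by auto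
    then show "es!i \<in> F" using F j(2) by blast
  qed
  have "(vs!0, vs!j) \<in> (adj ((!) es ` {0..<j}) ends)\<^sup>*"
    using is_path_segment_rtrancl[OF p] j len by auto
  then have "(vs!0, vs!j) \<in> (adj F ends)\<^sup>*"
    by (rule rtrancl_adj_mono) (rule avoid, use j in auto)
  moreover have "(vs!Suc j, vs!length es) \<in> (adj ((!) es ` {Suc j..<length es}) ends)\<^sup>*"
    using is_path_segment_rtrancl[OF p] j len by auto
  then have "(vs!Suc j, vs!length es) \<in> (adj F ends)\<^sup>*"
    by (rule rtrancl_adj_mono) (rule avoid, auto)
  moreover have "(vs!0, vs!length es) \<in> (adj F ends)\<^sup>*"
  proof -
    have "vs \<noteq> []" using len(1) by auto
    then show ?thesis using hd_last len(1) by (simp add: hd_conv_nth last_conv_nth)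
  qed
  ultimately have "(vs!j, vs!Suc j) \<in> (adj F ends)\<^sup>*"
    by (meson rtrancl_adj_sym rtrancl_trans)
  then show ?thesis by (rule rtrancl_adj_doubleton[rotated]) (use ej e(2) in simp)
qed

lemma inner_subset: "inner vs \<subseteq> set vs"
  unfolding inner_def by (cases vs) (auto dest: in_set_butlastD)

lemma four_cycle_cong:
  assumes "\<forall>e\<in>C. f e = g e" "four_cycle f C"
  shows "four_cycle g C"
proof -
  obtain a b c d e1 e2 e3 e4 where h: "distinct [a,b,c,d]" "distinct [e1,e2,e3,e4]"
    "C = {e1,e2,e3,e4}" "f e1 = {a,b}" "f e2 = {b,c}" "f e3 = {c,d}" "f e4 = {d,a}"
    using assms(2) unfolding four_cycle_def by blast
  then have "g e1 = {a,b}" "g e2 = {b,c}" "g e3 = {c,d}" "g e4 = {d,a}" using assms(1) by auto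
  then show ?thesis unfolding four_cycle_def using h(1-3) by blast
qed

lemma four_cycle_delete_edge_path:
  assumes dv: "distinct [a,b,c,d]" and de: "distinct [e1,e2,e3,e4]"
    and en: "en e1 = {a,b}" "en e2 = {b,c}" "en e3 = {c,d}" "en e4 = {d,a}"
    and f: "f \<in> {e1,e2,e3,e4}"
  obtains vs es where "is_path en vs es" "set es = {e1,e2,e3,e4} - {f}"
    "set vs = {a,b,c,d}" "{hd vs, last vs} = en f"
proof -
  have P: "is_path en [b,c,d,a] [e2,e3,e4]" "is_path en [c,d,a,b] [e3,e4,e1]"
    "is_path en [d,a,b,c] [e4,e1,e2]" "is_path en [a,b,c,d] [e1,e2,e3]"
    using dv de en by (auto intro!: is_path_three_edges)
  from f consider "f = e1" | "f = e2" | "f = e3" | "f = e4" by blast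
  then show ?thesis
  proof cases
    case 1 show ?thesis by (rule that[OF P(1)]) (use 1 dv de en in auto)
  next
    case 2 show ?thesis by (rule that[OF P(2)]) (use 2 dv de en in auto)
  next
    case 3 show ?thesis by (rule that[OF P(3)]) (use 3 dv de en in auto)
  next
    case 4 show ?thesis by (rule that[OF P(4)]) (use 4 dv de en in auto)
  qed
qed

lemma four_cycle_delete_vertex_path:
  assumes dv: "distinct [a,b,c,d]" and de: "distinct [e1,e2,e3,e4]"
    and en: "en e1 = {a,b}" "en e2 = {b,c}" "en e3 = {c,d}" "en e4 = {d,a}"
    and p: "p \<in> {a,b,c,d}"
  obtains vs es where "is_path en vs es" "set es = {e\<in>{e1,e2,e3,e4}. p \<notin> en e}"
    "set vs = {a,b,c,d} - {p}"
proof -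
  have P: "is_path en [b,c,d] [e2,e3]" "is_path en [c,d,a] [e3,e4]"
    "is_path en [d,a,b] [e4,e1]" "is_path en [a,b,c] [e1,e2]"
    using dv de en by (auto intro!: is_path_two_edges)
  from p consider "p = a" | "p = b" | "p = c" | "p = d" by blast
  then show ?thesis
  proof cases
    case 1 show ?thesis by (rule that[OF P(1)]) (use 1 dv de en in auto)
  next
    case 2 show ?thesis by (rule that[OF P(2)]) (use 2 dv de en in auto)
  next
    case 3 show ?thesis by (rule that[OF P(3)]) (use 3 dv de en in auto)
  next
    case 4 show ?thesis by (rule that[OF P(4)]) (use 4 dv de en in auto)
  qed
qed

lemma four_cycle_opposite_edges:
  assumes dv: "distinct [a,b,c,d]"
    and en: "en e1 = {a,b}" "en e2 = {b,c}" "en e3 = {c,d}" "en e4 = {d,a}"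
    and h: "h1 \<noteq> h2" "{e1,e2,e3,e4} \<inter> H = {h1,h2}" "en h1 \<inter> en h2 = {}"
  shows "{e1,e2,e3,e4} \<inter> H = {e1,e3} \<or> {e1,e2,e3,e4} \<inter> H = {e2,e4}"
proof -
  have "h1 \<in> {e1,e2,e3,e4}" "h2 \<in> {e1,e2,e3,e4}" using h(2) by auto
  then have "{h1,h2} = {e1,e3} \<or> {h1,h2} = {e2,e4}"
    using h(1,3) en dv by auto
  then show ?thesis using h(2) by simp
qed

section \<open>Half-integer square points\<close>

definition subdivision_paths ::
  "'v set \<Rightarrow> 'e set \<Rightarrow> ('e \<Rightarrow> 'v set) \<Rightarrow> ('e \<Rightarrow> real) \<Rightarrow>
   'v set \<Rightarrow> 'e set \<Rightarrow> ('e \<Rightarrow> 'v set) \<Rightarrow> ('e \<Rightarrow> real) \<Rightarrow>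
   ('e \<Rightarrow> 'v list) \<Rightarrow> ('e \<Rightarrow> 'e list) \<Rightarrow> bool" where
  "subdivision_paths V0 E0 ends0 x0 V E ends x pv pe \<longleftrightarrow>
     (\<forall>f\<in>E0. x0 f = 1 \<longrightarrow>
         is_path ends (pv f) (pe f) \<and> {hd (pv f), last (pv f)} = ends0 f \<and>
         set (pe f) \<subseteq> E \<and> (\<forall>e\<in>set (pe f). x e = 1) \<and>
         inner (pv f) \<inter> V0 = {}) \<and>
     (\<forall>f\<in>E0. \<forall>g\<in>E0. x0 f = 1 \<and> x0 g = 1 \<and> f \<noteq> g \<longrightarrow>
         set (pe f) \<inter> set (pe g) = {} \<and> inner (pv f) \<inter> inner (pv g) = {}) \<and>
     {e\<in>E. x e = 1} = (\<Union>f\<in>{f\<in>E0. x0 f = 1}. set (pe f)) \<and>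
     V = V0 \<union> (\<Union>f\<in>{f\<in>E0. x0 f = 1}. inner (pv f))"

locale square_point =
  fixes V0 :: "'v set" and E0 :: "'e set" and ends0 :: "'e \<Rightarrow> 'v set" and x0 :: "'e \<Rightarrow> real"
    and V :: "'v set" and E :: "'e set" and ends :: "'e \<Rightarrow> 'v set" and x :: "'e \<Rightarrow> real"
    and H :: "'e set" and pv :: "'e \<Rightarrow> 'v list" and pe :: "'e \<Rightarrow> 'e list"
  assumes boyd_carr: "boyd_carr_point V0 E0 ends0 x0"
    and subdivision: "subdivision V0 E0 ends0 x0 V E ends x"
    and paths: "subdivision_paths V0 E0 ends0 x0 V E ends x pv pe"
    and opposite_H: "\<forall>C\<in>half_squares E ends x. \<exists>e1 e2. e1 \<noteq> e2 \<and> C \<inter> H = {e1, e2} \<and>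
                       ends e1 \<inter> ends e2 = {}"
    and no_loops: "\<forall>g\<in>contr_E E0 x0. card (contr_ends E0 ends0 x0 g) = 2"
begin

abbreviation "VG \<equiv> contr_V E0 ends0 x0"
abbreviation "EG \<equiv> contr_E E0 x0"
abbreviation "endsG \<equiv> contr_ends E0 ends0 x0"
abbreviation "HS \<equiv> half_squares E0 ends0 x0"

lemma EG_eq: "EG = {f\<in>E0. x0 f = 1}"
  unfolding contr_E_def ..

lemma wf_graph0: "wf_graph V0 E0 ends0"
  using boyd_carr unfolding boyd_carr_point_def by (elim conjE)

lemma wf_graph: "wf_graph V E ends"
  and x_cases: "e \<in> E \<Longrightarrow> x e = 1/2 \<or> x e = 1"
  and half_edges_eq: "{e\<in>E. x e = 1/2} = {e\<in>E0. x0 e = 1/2}"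
  and ends_half_edge: "e \<in> E0 \<Longrightarrow> x0 e = 1/2 \<Longrightarrow> ends e = ends0 e"
  using subdivision unfolding subdivision_def by simp_all

lemma half_edge:
  assumes "e \<in> E" "x e = 1/2"
  shows "e \<in> E0" "x0 e = 1/2" "ends e = ends0 e"
  using assms half_edges_eq ends_half_edge by blast+

lemma path_of_EG:
  assumes "f \<in> EG"
  shows "is_path ends (pv f) (pe f)" "{hd (pv f), last (pv f)} = ends0 f"
    "set (pe f) \<subseteq> E" "\<forall>e\<in>set (pe f). x e = 1"
  using assms paths unfolding subdivision_paths_def EG_eq by auto

lemma paths_disjoint: "f \<in> EG \<Longrightarrow> g \<in> EG \<Longrightarrow> f \<noteq> g \<Longrightarrow> set (pe f) \<inter> set (pe g) = {}"
  using paths unfolding subdivision_paths_def EG_eq by simp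

lemma one_edges_eq: "{e\<in>E. x e = 1} = (\<Union>f\<in>EG. set (pe f))"
  and V_eq: "V = V0 \<union> (\<Union>f\<in>EG. inner (pv f))"
  using paths unfolding subdivision_paths_def EG_eq by simp_all

lemma ends0_subset: "f \<in> E0 \<Longrightarrow> ends0 f \<subseteq> V0"
  using wf_graph0 unfolding wf_graph_def by blast

lemma endsG_subset: "endsG g \<subseteq> VG"
  unfolding contr_ends_def by blast

lemma EG_ends:
  assumes "g \<in> EG"
  obtains u w where "ends0 g = {u,w}" "u \<noteq> w" "u \<in> V0" "w \<in> V0"
proof -
  have "card (ends0 g) = 2" "ends0 g \<subseteq> V0"
    using wf_graph0 assms unfolding wf_graph_def EG_eq by auto
  then show ?thesis using that unfolding card_2_iff by auto
qed

definition one_edge :: "'v \<Rightarrow> 'e" where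
  "one_edge v = (THE f. f \<in> EG \<and> v \<in> ends0 f)"

lemma one_edge:
  assumes "v \<in> V0"
  shows "one_edge v \<in> EG" "v \<in> ends0 (one_edge v)"
    and "\<And>f. f \<in> EG \<Longrightarrow> v \<in> ends0 f \<Longrightarrow> f = one_edge v"
proof -
  have "card {f\<in>E0. v \<in> ends0 f \<and> x0 f = 1} = 1"
    using boyd_carr assms unfolding boyd_carr_point_def by auto
  then obtain f where f: "{f\<in>E0. v \<in> ends0 f \<and> x0 f = 1} = {f}"
    by (meson card_1_singletonE)
  then have "one_edge v = f"
    unfolding one_edge_def EG_eq by (intro the_equality) auto
  then show "one_edge v \<in> EG" "v \<in> ends0 (one_edge v)"
    "\<And>g. g \<in> EG \<Longrightarrow> v \<in> ends0 g \<Longrightarrow> g = one_edge v"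
    using f unfolding EG_eq by auto
qed

lemma one_edge_eq: "f \<in> EG \<Longrightarrow> v \<in> ends0 f \<Longrightarrow> one_edge v = f"
  using one_edge(3) wf_graph0 unfolding wf_graph_def EG_eq by blast

lemma HS_disjoint:
  "Q \<in> HS \<Longrightarrow> Q' \<in> HS \<Longrightarrow> v \<in> verts ends0 Q \<Longrightarrow> v \<in> verts ends0 Q' \<Longrightarrow> Q = Q'"
  using boyd_carr unfolding boyd_carr_point_def by blast

lemma VG_disjoint: "W \<in> VG \<Longrightarrow> W' \<in> VG \<Longrightarrow> v \<in> W \<Longrightarrow> v \<in> W' \<Longrightarrow> W = W'"
  unfolding contr_V_def using HS_disjoint by blast

definition square_of :: "'v \<Rightarrow> 'v set" where
  "square_of v = (THE W. W \<in> VG \<and> v \<in> W)"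

lemma square_of_eq: "W \<in> VG \<Longrightarrow> v \<in> W \<Longrightarrow> square_of v = W"
  unfolding square_of_def by (rule the_equality) (auto dest: VG_disjoint[of W _ v])

text \<open>This is where the absence of loops in the contracted graph G is used.\<close>

lemma EG_other_end:
  assumes g: "g \<in> EG" and u: "u \<in> ends0 g"
  obtains w where "ends0 g = {u,w}" "w \<in> V0" "square_of u \<noteq> square_of w"
    "endsG g = {square_of u, square_of w}" "u \<in> square_of u" "square_of u \<in> VG"
proof -
  obtain a b where "ends0 g = {a,b}" "a \<noteq> b" "a \<in> V0" "b \<in> V0" using EG_ends[OF g] by blast
  then obtain w where w: "ends0 g = {u,w}" "u \<in> V0" "w \<in> V0" using u by auto
  obtain W1 W2 where W: "endsG g = {W1,W2}" "W1 \<noteq> W2"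
    using no_loops g by (meson card_2_iff)
  have W1: "W1 \<in> VG" "W1 \<inter> {u,w} \<noteq> {}" and W2: "W2 \<in> VG" "W2 \<inter> {u,w} \<noteq> {}"
    using W w(1) unfolding contr_ends_def by auto
  have "W1 \<inter> W2 = {}" using VG_disjoint W1(1) W2(1) W(2) by blast
  then consider "u \<in> W1" "w \<in> W2" | "u \<in> W2" "w \<in> W1" using W1(2) W2(2) by blast
  then show ?thesis
  proof cases
    case 1
    then have "square_of u = W1" "square_of w = W2" using square_of_eq W1(1) W2(1) by auto
    then show ?thesis using that[OF w(1,3)] 1 W W1(1) W2(1) by simp
  next
    case 2
    then have "square_of u = W2" "square_of w = W1" using square_of_eq W1(1) W2(1) by auto
    then show ?thesis using that[OF w(1,3)] 2 W W1(1) W2(1) by (simp add: insert_commute)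
  qed
qed

lemma square_of:
  assumes "v \<in> V0"
  shows "square_of v \<in> VG \<and> v \<in> square_of v"
  by (rule EG_other_end[OF one_edge(1,2)[OF assms]]) simp

definition mate :: "'v \<Rightarrow> 'v" where
  "mate v = (SOME w. ends0 (one_edge v) = {v,w})"

lemma mate:
  assumes v: "v \<in> V0"
  shows "ends0 (one_edge v) = {v, mate v}" "mate v \<in> V0" "mate v \<noteq> v"
    "square_of (mate v) \<noteq> square_of v" "one_edge (mate v) = one_edge v"
    "endsG (one_edge v) = {square_of v, square_of (mate v)}"
proof -
  obtain w where w: "ends0 (one_edge v) = {v,w}" "w \<in> V0" "square_of v \<noteq> square_of w"
    "endsG (one_edge v) = {square_of v, square_of w}" "v \<in> square_of v" "square_of v \<in> VG"
    by (rule EG_other_end[OF one_edge(1,2)[OF v]])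
  have mate_v: "ends0 (one_edge v) = {v, mate v}"
    unfolding mate_def by (rule someI[where P = "\<lambda>w. ends0 (one_edge v) = {v,w}", OF w(1)])
  have "v \<noteq> w" using w(3) by auto
  then have "mate v = w" using mate_v w(1) by (simp add: doubleton_eq_iff)
  then show "ends0 (one_edge v) = {v, mate v}" "mate v \<in> V0" "mate v \<noteq> v"
    "square_of (mate v) \<noteq> square_of v" "endsG (one_edge v) = {square_of v, square_of (mate v)}"
    using w by auto
  show "one_edge (mate v) = one_edge v"
    unfolding \<open>mate v = w\<close> by (rule one_edge_eq[OF one_edge(1)[OF v]]) (simp add: w(1))
qed

lemma ends_connected_by_path:
  assumes "f \<in> EG" "set (pe f) \<subseteq> F" "u \<in> ends0 f" "w \<in> ends0 f"
  shows "(u,w) \<in> (adj F ends)\<^sup>*"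
proof -
  have "ends0 f \<subseteq> set (pv f)"
    using is_path_hd_last[OF path_of_EG(1)[OF assms(1)]]
    unfolding path_of_EG(2)[OF assms(1), symmetric] by simp
  then show ?thesis using is_path_rtrancl[OF path_of_EG(1)[OF assms(1)] assms(2)] assms(3,4) by auto
qed

lemma VG_subset: "W \<in> VG \<Longrightarrow> W \<subseteq> V0"
  using wf_graph0 unfolding contr_V_def half_squares_def verts_def wf_graph_def by blast

lemma mate_outside_square:
  assumes "W \<in> VG" "v \<in> W"
  shows "mate v \<notin> W"
proof
  assume "mate v \<in> W"
  then have "square_of (mate v) = square_of v"
    using square_of_eq[OF assms(1)] assms(2) by simp
  moreover have "v \<in> V0" using VG_subset assms by blast
  ultimately show False using mate(4) by blast
qed

definition square_edges :: "'v set \<Rightarrow> 'e set" where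
  "square_edges W = {e\<in>E0. x0 e = 1/2 \<and> ends0 e \<subseteq> W}"

lemma square_edges_half_edge: "e \<in> square_edges W \<Longrightarrow> e \<in> E \<and> x e = 1/2 \<and> ends e = ends0 e"
  using half_edges_eq ends_half_edge unfolding square_edges_def by auto

lemma square_edges_verts:
  assumes Q: "Q \<in> HS"
  shows "square_edges (verts ends0 Q) = Q"
proof
  have half: "\<Union>HS = {e\<in>E0. x0 e = 1/2}"
    using boyd_carr unfolding boyd_carr_point_def by blast
  then show "Q \<subseteq> square_edges (verts ends0 Q)"
    using Q unfolding square_edges_def verts_def by auto
  show "square_edges (verts ends0 Q) \<subseteq> Q"
  proof
    fix e assume e: "e \<in> square_edges (verts ends0 Q)"
    then obtain Q' where Q': "Q' \<in> HS" "e \<in> Q'" using half unfolding square_edges_def by blast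
    have "ends0 e \<noteq> {}" using wf_graph0 e unfolding wf_graph_def square_edges_def by fastforce
    then obtain v where "v \<in> ends0 e" by blast
    then have "v \<in> verts ends0 Q" "v \<in> verts ends0 Q'"
      using e Q' unfolding square_edges_def verts_def by auto
    then show "e \<in> Q" using HS_disjoint[OF Q(1) Q'(1)] Q'(2) by blast
  qed
qed

lemma half_squares_eq: "half_squares E ends x = HS"
proof -
  have "four_cycle ends C = four_cycle ends0 C" if "C \<subseteq> {e\<in>E0. x0 e = 1/2}" for C
  proof -
    have "\<forall>e\<in>C. ends e = ends0 e" using that ends_half_edge by auto
    then show ?thesis
      using four_cycle_cong[of C ends ends0] four_cycle_cong[of C ends0 ends] by auto
  qed
  then show ?thesis unfolding half_squares_def using half_edges_eq by auto
qed

lemma square_structure: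
  assumes W: "W \<in> VG"
  obtains a b c d e1 e2 e3 e4 where "distinct [a,b,c,d]" "distinct [e1,e2,e3,e4]"
    "W = {a,b,c,d}" "square_edges W = {e1,e2,e3,e4}"
    "ends0 e1 = {a,b}" "ends0 e2 = {b,c}" "ends0 e3 = {c,d}" "ends0 e4 = {d,a}"
    "square_edges W \<inter> H = {e1,e3}"
proof -
  obtain Q where Q: "Q \<in> HS" "W = verts ends0 Q" using W unfolding contr_V_def by auto
  obtain a b c d e1 e2 e3 e4 where fc: "distinct [a,b,c,d]" "distinct [e1,e2,e3,e4]"
    "Q = {e1,e2,e3,e4}" "ends0 e1 = {a,b}" "ends0 e2 = {b,c}" "ends0 e3 = {c,d}" "ends0 e4 = {d,a}"
  proof -
    have "four_cycle ends0 Q" using Q(1) unfolding half_squares_def by blast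
    then show ?thesis using that unfolding four_cycle_def by blast
  qed
  have WQ: "W = {a,b,c,d}" "square_edges W = Q"
    using Q(2) fc(3-7) square_edges_verts[OF Q(1)] unfolding verts_def by auto
  have "Q \<in> half_squares E ends x" using Q(1) half_squares_eq by simp
  then obtain h1 h2 where h: "h1 \<noteq> h2" "Q \<inter> H = {h1,h2}" "ends h1 \<inter> ends h2 = {}"
    using bspec[OF opposite_H] by blast
  have "ends h1 = ends0 h1" "ends h2 = ends0 h2"
    using h(2) Q(1) ends_half_edge unfolding half_squares_def by auto
  then have "Q \<inter> H = {e1,e3} \<or> Q \<inter> H = {e2,e4}"
    using four_cycle_opposite_edges[OF fc(1,4-7) h(1)] h fc(3) by simp
  then show ?thesis
  proof
    assume "Q \<inter> H = {e1,e3}"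
    then show ?thesis using that[OF fc(1,2) WQ(1) _ fc(4-7)] WQ(2) fc(3) by simp
  next
    assume "Q \<inter> H = {e2,e4}"
    moreover have "distinct [b,c,d,a]" "distinct [e2,e3,e4,e1]" using fc(1,2) by auto
    moreover have "W = {b,c,d,a}" "square_edges W = {e2,e3,e4,e1}"
      using WQ fc(3) by (simp_all add: insert_commute)
    ultimately show ?thesis
      using that[of b c d a e2 e3 e4 e1] fc(4-7) WQ(2) by (simp add: insert_commute)
  qed
qed

lemma is_path_square_edges:
  "is_path ends0 vs es \<Longrightarrow> set es \<subseteq> square_edges W \<Longrightarrow> is_path ends vs es"
  by (erule is_path_cong[rotated]) (use square_edges_half_edge in auto)

definition first_end :: "'e \<Rightarrow> 'v" where
  "first_end f = (SOME v. v \<in> ends0 f)"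

lemma first_end: "f \<in> E0 \<Longrightarrow> first_end f \<in> ends0 f"
  unfolding first_end_def using wf_graph0 some_in_eq unfolding wf_graph_def by fastforce

definition square_of_edge :: "'e \<Rightarrow> 'v set" where
  "square_of_edge e = square_of (first_end e)"

lemma square_of_edge_eq:
  assumes W: "W \<in> VG" and e: "e \<in> square_edges W"
  shows "square_of_edge e = W"
proof -
  have "first_end e \<in> W" using first_end e unfolding square_edges_def by blast
  then show ?thesis unfolding square_of_edge_def using square_of_eq W by simp
qed

lemma square_of_edge:
  assumes "e \<in> E" "x e = 1/2"
  shows "square_of_edge e \<in> VG" "e \<in> square_edges (square_of_edge e)"
proof -
  have "e \<in> \<Union>HS"
    using boyd_carr half_edge[OF assms] unfolding boyd_carr_point_def by blast
  then obtain Q where Q: "Q \<in> HS" "e \<in> Q" by blast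
  then have "verts ends0 Q \<in> VG" "e \<in> square_edges (verts ends0 Q)"
    using square_edges_verts unfolding contr_V_def by auto
  then show "square_of_edge e \<in> VG" "e \<in> square_edges (square_of_edge e)"
    using square_of_edge_eq by auto
qed

lemma square_edges_disjoint:
  "W \<in> VG \<Longrightarrow> W' \<in> VG \<Longrightarrow> e \<in> square_edges W \<Longrightarrow> e \<in> square_edges W' \<Longrightarrow> W = W'"
  using square_of_edge_eq by blast

definition path_owner :: "'e \<Rightarrow> 'e" where
  "path_owner e = (THE f. f \<in> EG \<and> e \<in> set (pe f))"

lemma path_owner_eq: "f \<in> EG \<Longrightarrow> e \<in> set (pe f) \<Longrightarrow> path_owner e = f"
  unfolding path_owner_def using paths_disjoint by (intro the_equality) blast+

lemma path_owner:
  assumes "e \<in> E" "x e = 1"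
  shows "path_owner e \<in> EG" "e \<in> set (pe (path_owner e))"
proof -
  obtain f where "f \<in> EG" "e \<in> set (pe f)" using assms one_edges_eq by blast
  then show "path_owner e \<in> EG" "e \<in> set (pe (path_owner e))" using path_owner_eq by auto
qed

definition dropped_H_edge :: "bool \<Rightarrow> 'v set \<Rightarrow> 'e" where
  "dropped_H_edge t W =
     (SOME e. e \<in> square_edges W \<inter> H \<and> (e = (SOME h. h \<in> square_edges W \<inter> H) \<longleftrightarrow> t))"

lemma dropped_H_edge:
  assumes "W \<in> VG"
  shows "square_edges W \<inter> H = {dropped_H_edge True W, dropped_H_edge False W}"
    "dropped_H_edge True W \<noteq> dropped_H_edge False W"
proof -
  obtain e1 e3 where e: "square_edges W \<inter> H = {e1,e3}" "e1 \<noteq> e3"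
  proof (rule square_structure[OF assms])
    fix a b c d e1 e2 e3 e4
    assume "distinct [e1,e2,e3,e4]" "square_edges W \<inter> H = {e1,e3}"
    then show thesis using that by simp
  qed
  define h where "h = (SOME h. h \<in> {e1,e3})"
  have h: "h \<in> {e1,e3}" unfolding h_def by (rule someI[of _ e1]) simp
  have dropped: "dropped_H_edge t W = (SOME e. e \<in> {e1,e3} \<and> (e = h \<longleftrightarrow> t))" for t
    unfolding dropped_H_edge_def e(1) h_def by (rule refl)
  have "dropped_H_edge True W = h"
    unfolding dropped using h by (intro some_equality) simp_all
  moreover have "dropped_H_edge False W \<in> {e1,e3} - {h}"
    unfolding dropped by (rule someI2_ex) (use h e(2) in auto)
  ultimately show "square_edges W \<inter> H = {dropped_H_edge True W, dropped_H_edge False W}"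
    "dropped_H_edge True W \<noteq> dropped_H_edge False W"
    using h e by auto
qed

section \<open>The multigraphs of a matching\<close>

definition matched :: "'e set \<Rightarrow> 'v \<Rightarrow> bool" where
  "matched M v \<longleftrightarrow> v \<in> V0 \<and> one_edge v \<in> M"

definition pendant :: "'e set \<Rightarrow> bool \<Rightarrow> 'v \<Rightarrow> bool" where
  "pendant M t v \<longleftrightarrow> matched M v \<and> (v = first_end (one_edge v) \<longleftrightarrow> t)"

text \<open>A half-square contains at most one matched vertex p. If p is the pendant end of its
  doubled path (the end chosen by first_end for t = True, the other end for t = False), both
  half-edges at p are dropped; otherwise the H-edge avoiding p is dropped. A half-square
  without matched vertex drops one of its two H-edges, a different one for each t. Flipping t
  is what makes the average over t come out right on the half-edges.\<close>

definition kept :: "'e set \<Rightarrow> bool \<Rightarrow> 'e \<Rightarrow> bool" where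
  "kept M t e \<longleftrightarrow> (let W = square_of_edge e in
     (\<forall>p\<in>W. matched M p \<longrightarrow> (if pendant M t p then p \<notin> ends0 e else e \<in> H \<longrightarrow> p \<in> ends0 e)) \<and>
     ((\<forall>p\<in>W. \<not> matched M p) \<longrightarrow> e \<noteq> dropped_H_edge t W))"

definition mult :: "'e set \<Rightarrow> bool \<Rightarrow> 'e \<Rightarrow> nat" where
  "mult M t e = (if e \<in> E \<and> x e = 1 then (if path_owner e \<in> M then 2 else 1)
     else if e \<in> E \<and> x e = 1/2 \<and> kept M t e then 1 else 0)"

lemma kept_iff:
  assumes "W \<in> VG" "e \<in> square_edges W"
  shows "kept M t e \<longleftrightarrow>
    (\<forall>p\<in>W. matched M p \<longrightarrow> (if pendant M t p then p \<notin> ends0 e else e \<in> H \<longrightarrow> p \<in> ends0 e)) \<and>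
    ((\<forall>p\<in>W. \<not> matched M p) \<longrightarrow> e \<noteq> dropped_H_edge t W)"
  by (simp only: kept_def Let_def square_of_edge_eq[OF assms])

end

locale square_point_matching = square_point +
  fixes M
  assumes matching: "matching (contr_E E0 x0) (contr_ends E0 ends0 x0) M"
    and two_connected:
      "two_vertex_connected (contr_V E0 ends0 x0) (contr_E E0 x0 - M) (contr_ends E0 ends0 x0)"
begin

lemma matched_unique:
  assumes W: "W \<in> VG" and p: "p \<in> W" "matched M p" and q: "q \<in> W" "matched M q"
  shows "p = q"
proof -
  have pq: "p \<in> V0" "q \<in> V0" "one_edge p \<in> M" "one_edge q \<in> M"
    using p q unfolding matched_def by auto
  have "W \<in> endsG (one_edge p)" "W \<in> endsG (one_edge q)"
    unfolding contr_ends_def using W p(1) q(1) one_edge(2)[OF pq(1)] one_edge(2)[OF pq(2)] by auto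
  then have same: "one_edge q = one_edge p"
    using matching pq(3,4) unfolding matching_def by blast
  have "q \<in> {p, mate p}" using one_edge(2)[OF pq(2)] mate(1)[OF pq(1)] unfolding same by simp
  moreover have "square_of p = W" "square_of q = W" using square_of_eq W p(1) q(1) by auto
  ultimately show ?thesis using mate(4)[OF pq(1)] by auto
qed

lemma unmatched_end: "g \<in> EG \<Longrightarrow> g \<notin> M \<Longrightarrow> u \<in> ends0 g \<Longrightarrow> \<not> matched M u"
  unfolding matched_def using one_edge_eq[of g u] by simp

lemma matched_mate: "v \<in> V0 \<Longrightarrow> matched M (mate v) \<longleftrightarrow> matched M v"
  unfolding matched_def using mate(2,5) by simp

lemma pendant_matched: "pendant M t p \<Longrightarrow> matched M p"
  unfolding pendant_def by simp

lemma pendant_flip: "matched M p \<Longrightarrow> pendant M (\<not> t) p \<longleftrightarrow> \<not> pendant M t p"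
  unfolding pendant_def by auto

lemma pendant_mate:
  assumes "matched M v"
  shows "pendant M t (mate v) \<longleftrightarrow> \<not> pendant M t v"
proof -
  have v: "v \<in> V0" using assms unfolding matched_def by simp
  define f where "f = first_end (one_edge v)"
  have "f \<in> ends0 (one_edge v)" using first_end one_edge(1)[OF v] unfolding f_def EG_eq by blast
  then have "f = v \<or> f = mate v" using mate(1)[OF v] by simp
  moreover have "pendant M t v \<longleftrightarrow> (v = f \<longleftrightarrow> t)"
    using assms unfolding pendant_def f_def by simp
  moreover have "pendant M t (mate v) \<longleftrightarrow> (mate v = f \<longleftrightarrow> t)"
    using assms matched_mate[OF v] mate(5)[OF v] unfolding pendant_def f_def by simp
  ultimately show ?thesis using mate(3)[OF v] by auto
qed

lemma kept_matched:
  assumes W: "W \<in> VG" "e \<in> square_edges W" and p: "p \<in> W" "matched M p"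
  shows "kept M t e \<longleftrightarrow> (if pendant M t p then p \<notin> ends0 e else e \<in> H \<longrightarrow> p \<in> ends0 e)"
proof -
  have "matched M q \<longleftrightarrow> q = p" if "q \<in> W" for q
    using matched_unique[OF W(1) p that] p by blast
  then show ?thesis unfolding kept_iff[OF W] using p by auto
qed

lemma kept_unmatched:
  assumes W: "W \<in> VG" "e \<in> square_edges W" and none: "\<forall>p\<in>W. \<not> matched M p"
  shows "kept M t e \<longleftrightarrow> e \<noteq> dropped_H_edge t W"
  unfolding kept_iff[OF W] using none by auto

lemma kept_edges_unmatched:
  assumes W: "W \<in> VG" and none: "\<forall>p\<in>W. \<not> matched M p"
  shows "{e\<in>square_edges W. kept M t e} = square_edges W - {dropped_H_edge t W}"
  using kept_unmatched[OF W _ none] by blast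

lemma kept_edges_pendant:
  assumes W: "W \<in> VG" and p: "p \<in> W" "pendant M t p"
  shows "{e\<in>square_edges W. kept M t e} = {e\<in>square_edges W. p \<notin> ends0 e}"
  using kept_matched[OF W _ p(1) pendant_matched[OF p(2)]] p(2) by auto

lemma kept_edges_non_pendant:
  assumes W: "W \<in> VG" and p: "p \<in> W" "matched M p" "\<not> pendant M t p"
    and h: "h \<in> square_edges W \<inter> H" "p \<notin> ends0 h"
  shows "{e\<in>square_edges W. kept M t e} = square_edges W - {h}"
proof -
  obtain a b c d e1 e2 e3 e4 where s: "distinct [a,b,c,d]" "distinct [e1,e2,e3,e4]"
    "W = {a,b,c,d}" "square_edges W = {e1,e2,e3,e4}"
    "ends0 e1 = {a,b}" "ends0 e2 = {b,c}" "ends0 e3 = {c,d}" "ends0 e4 = {d,a}"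
    "square_edges W \<inter> H = {e1,e3}"
    by (rule square_structure[OF W])
  have "p \<in> ends0 e" if "e \<in> square_edges W \<inter> H" "e \<noteq> h" for e
    using that h p(1) s by auto
  then show ?thesis
    using kept_matched[OF W _ p(1,2)] p(3) h by auto
qed

lemma square_kept_path_unmatched:
  assumes W: "W \<in> VG" and none: "\<forall>p\<in>W. \<not> matched M p"
  obtains vs es where "is_path ends vs es" "set es = {e\<in>square_edges W. kept M t e}"
    "set vs = W - {p. pendant M t p}" "\<not> matched M (hd vs)" "\<not> matched M (last vs)"
proof -
  obtain a b c d e1 e2 e3 e4 where s: "distinct [a,b,c,d]" "distinct [e1,e2,e3,e4]"
    "W = {a,b,c,d}" "square_edges W = {e1,e2,e3,e4}"
    "ends0 e1 = {a,b}" "ends0 e2 = {b,c}" "ends0 e3 = {c,d}" "ends0 e4 = {d,a}"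
    "square_edges W \<inter> H = {e1,e3}"
    by (rule square_structure[OF W])
  have "dropped_H_edge t W \<in> square_edges W" using dropped_H_edge(1)[OF W] by (cases t) auto
  then have "dropped_H_edge t W \<in> {e1,e2,e3,e4}" using s(4) by simp
  then obtain vs es where p: "is_path ends0 vs es"
    and es: "set es = {e1,e2,e3,e4} - {dropped_H_edge t W}" and vs: "set vs = {a,b,c,d}"
    and "{hd vs, last vs} = ends0 (dropped_H_edge t W)"
    by (rule four_cycle_delete_edge_path[OF s(1,2,5-8)])
  show ?thesis
  proof (rule that)
    show "is_path ends vs es" using is_path_square_edges[OF p] es s(4) by blast
    show "set es = {e\<in>square_edges W. kept M t e}"
      using es s(4) kept_edges_unmatched[OF W none] by simp
    show "set vs = W - {p. pendant M t p}" using vs s(3) none pendant_matched by blast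
    show "\<not> matched M (hd vs)" "\<not> matched M (last vs)"
      using is_path_hd_last[OF p] vs s(3) none by auto
  qed
qed

lemma square_kept_path_pendant:
  assumes W: "W \<in> VG" and p: "p \<in> W" "pendant M t p"
  obtains vs es where "is_path ends vs es" "set es = {e\<in>square_edges W. kept M t e}"
    "set vs = W - {p. pendant M t p}" "\<not> matched M (hd vs)" "\<not> matched M (last vs)"
proof -
  obtain a b c d e1 e2 e3 e4 where s: "distinct [a,b,c,d]" "distinct [e1,e2,e3,e4]"
    "W = {a,b,c,d}" "square_edges W = {e1,e2,e3,e4}"
    "ends0 e1 = {a,b}" "ends0 e2 = {b,c}" "ends0 e3 = {c,d}" "ends0 e4 = {d,a}"
    "square_edges W \<inter> H = {e1,e3}"
    by (rule square_structure[OF W])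
  have only_p: "q = p" if "q \<in> W" "matched M q" for q
    using matched_unique[OF W that] p pendant_matched by blast
  have "p \<in> {a,b,c,d}" using p(1) s(3) by simp
  then obtain vs es where path: "is_path ends0 vs es"
    and es: "set es = {e\<in>{e1,e2,e3,e4}. p \<notin> ends0 e}" and vs: "set vs = {a,b,c,d} - {p}"
    by (rule four_cycle_delete_vertex_path[OF s(1,2,5-8)])
  show ?thesis
  proof (rule that)
    show "is_path ends vs es" using is_path_square_edges[OF path] es s(4) by blast
    show "set es = {e\<in>square_edges W. kept M t e}"
      using es s(4) kept_edges_pendant[OF W p] by simp
    show "set vs = W - {p. pendant M t p}"
      using vs s(3) p only_p pendant_matched by blast
    show "\<not> matched M (hd vs)" "\<not> matched M (last vs)"
      using is_path_hd_last[OF path] vs s(3) only_p by auto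
  qed
qed

lemma square_kept_path_non_pendant:
  assumes W: "W \<in> VG" and p: "p \<in> W" "matched M p" "\<not> pendant M t p"
  obtains vs es where "is_path ends vs es" "set es = {e\<in>square_edges W. kept M t e}"
    "set vs = W - {p. pendant M t p}" "\<not> matched M (hd vs)" "\<not> matched M (last vs)"
proof -
  obtain a b c d e1 e2 e3 e4 where s: "distinct [a,b,c,d]" "distinct [e1,e2,e3,e4]"
    "W = {a,b,c,d}" "square_edges W = {e1,e2,e3,e4}"
    "ends0 e1 = {a,b}" "ends0 e2 = {b,c}" "ends0 e3 = {c,d}" "ends0 e4 = {d,a}"
    "square_edges W \<inter> H = {e1,e3}"
    by (rule square_structure[OF W])
  have only_p: "q = p" if "q \<in> W" "matched M q" for q
    using matched_unique[OF W that] p by blast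
  obtain h where h: "h \<in> {e1,e3}" "p \<notin> ends0 h"
  proof (cases "p \<in> ends0 e1")
    case True
    then show thesis using that[of e3] s(1,5,7) by auto
  qed (use that[of e1] in auto)
  have hH: "h \<in> square_edges W \<inter> H" using h(1) s(9) by blast
  have "h \<in> {e1,e2,e3,e4}" using h(1) by blast
  then obtain vs es where path: "is_path ends0 vs es"
    and es: "set es = {e1,e2,e3,e4} - {h}" and vs: "set vs = {a,b,c,d}"
    and hd_last: "{hd vs, last vs} = ends0 h"
    by (rule four_cycle_delete_edge_path[OF s(1,2,5-8)])
  show ?thesis
  proof (rule that)
    show "is_path ends vs es" using is_path_square_edges[OF path] es s(4) by blast
    show "set es = {e\<in>square_edges W. kept M t e}"
      using es s(4) kept_edges_non_pendant[OF W p hH h(2)] by simp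
    have "W - {p. pendant M t p} = W" using only_p pendant_matched p(3) by blast
    then show "set vs = W - {p. pendant M t p}" using vs s(3) by simp
    have "hd vs \<in> W" "last vs \<in> W" "hd vs \<noteq> p" "last vs \<noteq> p"
      using is_path_hd_last[OF path] vs s(3) hd_last h(2) by auto
    then show "\<not> matched M (hd vs)" "\<not> matched M (last vs)"
      using only_p by blast+
  qed
qed

lemma square_kept_path:
  assumes W: "W \<in> VG"
  obtains vs es where "is_path ends vs es" "set es = {e\<in>square_edges W. kept M t e}"
    "set vs = W - {p. pendant M t p}" "\<not> matched M (hd vs)" "\<not> matched M (last vs)"
proof (cases "\<exists>p\<in>W. matched M p")
  case True
  then obtain p where p: "p \<in> W" "matched M p" by blast
  show thesis
  proof (cases "pendant M t p")
    case True
    then show thesis using square_kept_path_pendant[OF W p(1)] that by blast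
  next
    case False
    then show thesis using square_kept_path_non_pendant[OF W p] that by blast
  qed
next
  case False
  then show thesis using square_kept_path_unmatched[OF W] that by blast
qed

abbreviation supp where
  "supp t \<equiv> {e\<in>E. mult M t e \<ge> 1}"

lemma path_in_supp: "f \<in> EG \<Longrightarrow> set (pe f) \<subseteq> supp t"
  using path_of_EG(3,4)[of f] unfolding mult_def by auto

lemma kept_in_supp: "e \<in> square_edges W \<Longrightarrow> kept M t e \<Longrightarrow> e \<in> supp t"
  using square_edges_half_edge[of e W] unfolding mult_def by auto

lemma square_edge_not_on_path: "e \<in> square_edges W \<Longrightarrow> f \<in> EG \<Longrightarrow> e \<notin> set (pe f)"
  using square_edges_half_edge[of e W] path_of_EG(4)[of f] by fastforce

lemma square_connected:
  assumes W: "W \<in> VG" and u: "u \<in> W" "\<not> pendant M t u" and w: "w \<in> W" "\<not> pendant M t w"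
    and F: "{e\<in>square_edges W. kept M t e} \<subseteq> F"
  shows "(u,w) \<in> (adj F ends)\<^sup>*"
proof -
  obtain vs es where "is_path ends vs es" "set es = {e\<in>square_edges W. kept M t e}"
    "set vs = W - {p. pendant M t p}"
    by (rule square_kept_path[OF W])
  then show ?thesis using is_path_rtrancl[of ends vs es F u w] F u w by simp
qed

text \<open>Consecutive half-squares of the walk are joined by the path of the edge between them;
  inside a half-square the kept half-edges connect its non-pendant vertices.\<close>

lemma walk_lifts:
  assumes walk: "(P,P') \<in> (adj Fc endsG)\<^sup>*" and P: "P \<in> Z" and Z: "Z \<subseteq> VG"
    and Fc: "Fc \<subseteq> EG - M" "\<And>g. g \<in> Fc \<Longrightarrow> endsG g \<subseteq> Z"
    and F_paths: "\<And>g. g \<in> Fc \<Longrightarrow> set (pe g) \<subseteq> F"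
    and F_squares: "\<And>W. W \<in> Z \<Longrightarrow> {e\<in>square_edges W. kept M t e} \<subseteq> F"
    and u: "u \<in> P" "\<not> pendant M t u" and w: "w \<in> P'" "\<not> pendant M t w"
  shows "(u,w) \<in> (adj F ends)\<^sup>*"
  using walk w
proof (induction arbitrary: w rule: rtrancl_induct)
  case base
  then show ?case using square_connected[OF _ u base F_squares[OF P]] P Z by blast
next
  case (step Y Y')
  obtain g where g: "g \<in> Fc" "endsG g = {Y,Y'}" using step.hyps(2) unfolding adj_def by auto
  have gG: "g \<in> EG" "g \<notin> M" "Y' \<in> Z" using Fc g by auto
  have "Y \<in> endsG g" "Y' \<in> endsG g" using g(2) by auto
  then have "Y \<inter> ends0 g \<noteq> {}" "Y' \<inter> ends0 g \<noteq> {}" unfolding contr_ends_def by auto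
  then obtain y y' where yy': "y \<in> Y" "y \<in> ends0 g" "y' \<in> Y'" "y' \<in> ends0 g" by blast
  have "\<not> pendant M t y" "\<not> pendant M t y'"
    using unmatched_end[OF gG(1,2)] yy'(2,4) pendant_matched by blast+
  then have "(u,y) \<in> (adj F ends)\<^sup>*" "(y',w) \<in> (adj F ends)\<^sup>*"
    using step.IH[OF yy'(1)] square_connected[OF _ yy'(3) _ step.prems F_squares[OF gG(3)]] gG(3) Z
    by blast+
  moreover have "(y,y') \<in> (adj F ends)\<^sup>*"
    using ends_connected_by_path[OF gG(1) F_paths[OF g(1)] yy'(2,4)] .
  ultimately show ?case by (meson rtrancl_trans)
qed

lemma reaches_non_pendant:
  assumes v: "v \<in> V"
  shows "\<exists>a\<in>V0. \<not> pendant M t a \<and> (v,a) \<in> (adj (supp t) ends)\<^sup>*"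
proof -
  have from_V0: "\<exists>a\<in>V0. \<not> pendant M t a \<and> (v',a) \<in> (adj (supp t) ends)\<^sup>*" if v': "v' \<in> V0" for v'
  proof (cases "pendant M t v'")
    case True
    have "\<not> pendant M t (mate v')" using pendant_mate[OF pendant_matched[OF True]] True by simp
    moreover have "(v', mate v') \<in> (adj (supp t) ends)\<^sup>*"
      using ends_connected_by_path[OF one_edge(1)[OF v'] path_in_supp[OF one_edge(1)[OF v'], of t]]
        mate(1)[OF v']
      by simp
    ultimately show ?thesis using mate(2)[OF v'] by blast
  qed (use v' in blast)
  show ?thesis
  proof (cases "v \<in> V0")
    case False
    then obtain f where f: "f \<in> EG" "v \<in> inner (pv f)" using v V_eq by auto
    have "hd (pv f) \<in> ends0 f" "hd (pv f) \<in> set (pv f)"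
      using path_of_EG(2)[OF f(1)] is_path_hd_last[OF path_of_EG(1)[OF f(1)]] by auto
    moreover have "v \<in> set (pv f)" using f(2) inner_subset[of "pv f"] by blast
    ultimately have hd: "hd (pv f) \<in> V0" "(v, hd (pv f)) \<in> (adj (supp t) ends)\<^sup>*"
      using ends0_subset f(1) is_path_rtrancl[OF path_of_EG(1)[OF f(1)] path_in_supp[OF f(1)]]
      unfolding EG_eq by auto
    obtain a where "a \<in> V0" "\<not> pendant M t a" "(hd (pv f), a) \<in> (adj (supp t) ends)\<^sup>*"
      using from_V0[OF hd(1)] by blast
    then show ?thesis using rtrancl_trans[OF hd(2)] by blast
  qed (use from_V0 in blast)
qed

lemma supp_connected:
  assumes "u \<in> V" "w \<in> V"
  shows "(u,w) \<in> (adj (supp t) ends)\<^sup>*"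
proof -
  obtain a b where a: "a \<in> V0" "\<not> pendant M t a" "(u,a) \<in> (adj (supp t) ends)\<^sup>*"
    and b: "b \<in> V0" "\<not> pendant M t b" "(w,b) \<in> (adj (supp t) ends)\<^sup>*"
    using reaches_non_pendant assms by meson
  have sq: "square_of a \<in> VG" "a \<in> square_of a" "square_of b \<in> VG" "b \<in> square_of b"
    using square_of a(1) b(1) by auto
  then have "(square_of a, square_of b) \<in> (adj (EG - M) endsG)\<^sup>*"
    using two_connected unfolding two_vertex_connected_def connected_graph_def by blast
  then have ab: "(a,b) \<in> (adj (supp t) ends)\<^sup>*"
    using endsG_subset path_in_supp kept_in_supp sq a(2) b(2)
    by (intro walk_lifts[of _ _ "EG - M" VG]) auto
  show ?thesis using rtrancl_trans[OF rtrancl_trans[OF a(3) ab] rtrancl_adj_sym[OF b(3)]] .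
qed

text \<open>This is where 2-vertex-connectivity of G - M is used: G - M - W is still connected.\<close>

lemma connected_avoiding_square:
  assumes W: "W \<in> VG"
    and u: "u \<in> V0" "u \<notin> W" "\<not> pendant M t u" and w: "w \<in> V0" "w \<notin> W" "\<not> pendant M t w"
  shows "(u,w) \<in> (adj (supp t - square_edges W - (\<Union>g\<in>{g\<in>EG. W \<in> endsG g}. set (pe g))) ends)\<^sup>*"
proof -
  define F where "F = supp t - square_edges W - (\<Union>g\<in>{g\<in>EG. W \<in> endsG g}. set (pe g))"
  define Fc where "Fc = {g\<in>EG - M. W \<notin> endsG g}"
  have sq: "square_of u \<in> VG - {W}" "u \<in> square_of u" "square_of w \<in> VG - {W}" "w \<in> square_of w"
    using square_of u(1,2) w(1,2) by auto
  then have walk: "(square_of u, square_of w) \<in> (adj Fc endsG)\<^sup>*"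
    using two_connected W unfolding two_vertex_connected_def connected_graph_def Fc_def by blast
  have paths: "set (pe g) \<subseteq> F" if "g \<in> Fc" for g
  proof -
    have "set (pe g) \<inter> set (pe h) = {}" if "h \<in> EG" "W \<in> endsG h" for h
      using paths_disjoint[of g h] \<open>g \<in> Fc\<close> that unfolding Fc_def by blast
    then show ?thesis
      using that path_in_supp[of g t] square_edge_not_on_path[of _ W g]
      unfolding F_def Fc_def by blast
  qed
  have squares: "{e\<in>square_edges W'. kept M t e} \<subseteq> F" if "W' \<in> VG - {W}" for W'
    using that W kept_in_supp square_edges_disjoint[of W W'] square_edge_not_on_path[of _ W']
    unfolding F_def by blast
  have "(u,w) \<in> (adj F ends)\<^sup>*"
    by (rule walk_lifts[OF walk sq(1) _ _ _ paths squares sq(2) u(3) sq(4) w(3)])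
      (auto simp: Fc_def dest: subsetD[OF endsG_subset])
  then show ?thesis unfolding F_def .
qed

lemma unmatched_other_vertex:
  assumes W: "W \<in> VG" and u: "u \<in> W"
  obtains b where "b \<in> W" "b \<noteq> u" "\<not> matched M b"
proof -
  obtain a b c d e1 e2 e3 e4 where s: "distinct [a,b,c,d]" "distinct [e1,e2,e3,e4]"
    "W = {a,b,c,d}" "square_edges W = {e1,e2,e3,e4}"
    "ends0 e1 = {a,b}" "ends0 e2 = {b,c}" "ends0 e3 = {c,d}" "ends0 e4 = {d,a}"
    "square_edges W \<inter> H = {e1,e3}"
    by (rule square_structure[OF W])
  obtain y z where "y \<in> W" "z \<in> W" "y \<noteq> u" "z \<noteq> u" "y \<noteq> z"
  proof (cases "u \<in> {a,b}")
    case True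
    then show thesis using that[of c d] s(1,3) by auto
  qed (use that[of a b] s(1,3) in auto)
  then show thesis using that matched_unique[OF W] by blast
qed

lemma one_edge_ends_connected:
  assumes u: "u \<in> V0" "\<not> matched M u"
  shows "(u, mate u) \<in> (adj (supp t - set (pe (one_edge u))) ends)\<^sup>*"
proof -
  define F where "F = supp t - set (pe (one_edge u))"
  define W where "W = square_of u"
  have W: "W \<in> VG" "u \<in> W" using square_of u(1) unfolding W_def by auto
  obtain b where b: "b \<in> W" "b \<noteq> u" "\<not> matched M b" by (rule unmatched_other_vertex[OF W])
  have bV: "b \<in> V0" using VG_subset W(1) b(1) by blast
  have "one_edge b \<noteq> one_edge u"
  proof
    assume "one_edge b = one_edge u"
    then have "b = mate u" using one_edge(2)[OF bV] mate(1)[OF u(1)] b(2) by simp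
    then show False using mate_outside_square[OF W] b(1) by simp
  qed
  then have "set (pe (one_edge b)) \<subseteq> F"
    using paths_disjoint[OF one_edge(1)[OF bV] one_edge(1)[OF u(1)]] path_in_supp[of "one_edge b" t]
      one_edge(1)[OF bV] unfolding F_def by blast
  from ends_connected_by_path[OF one_edge(1)[OF bV] this]
  have b_mate: "(b, mate b) \<in> (adj F ends)\<^sup>*" unfolding mate(1)[OF bV] by blast
  have kept_F: "{e\<in>square_edges W. kept M t e} \<subseteq> F"
    using kept_in_supp square_edge_not_on_path[OF _ one_edge(1)[OF u(1)]] unfolding F_def by blast
  have "\<not> pendant M t u" "\<not> pendant M t b" using u(2) b(3) pendant_matched by blast+
  then have u_b: "(u,b) \<in> (adj F ends)\<^sup>*"
    using square_connected[OF W(1,2) _ b(1) _ kept_F] by blast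
  have "W \<in> endsG (one_edge u)" using mate(6)[OF u(1)] W_def by simp
  then have F: "supp t - square_edges W - (\<Union>g\<in>{g\<in>EG. W \<in> endsG g}. set (pe g)) \<subseteq> F"
    using one_edge(1)[OF u(1)] unfolding F_def by blast
  have "\<not> pendant M t (mate b)" "\<not> pendant M t (mate u)"
    using matched_mate bV u b(3) pendant_matched by blast+
  from connected_avoiding_square[OF W(1) mate(2)[OF bV] mate_outside_square[OF W(1) b(1)] this(1)
      mate(2)[OF u(1)] mate_outside_square[OF W] this(2)]
  have "(mate b, mate u) \<in> (adj F ends)\<^sup>*" using F by (rule rtrancl_adj_mono)
  then have "(u, mate u) \<in> (adj F ends)\<^sup>*"
    using rtrancl_trans[OF rtrancl_trans[OF u_b b_mate]] by blast
  then show ?thesis unfolding F_def .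
qed

lemma one_edge_on_cycle:
  assumes e: "e \<in> E" "x e = 1" "path_owner e \<notin> M" and ab: "ends e = {a,b}"
  shows "(a,b) \<in> (adj (supp t - {e}) ends)\<^sup>*"
proof -
  define g where "g = path_owner e"
  have g: "g \<in> EG" "e \<in> set (pe g)" using path_owner[OF e(1,2)] unfolding g_def by auto
  define u where "u = hd (pv g)"
  have "u \<in> ends0 g" using path_of_EG(2)[OF g(1)] unfolding u_def by auto
  then have u: "u \<in> V0" "one_edge u = g"
    using ends0_subset[of g] one_edge_eq[OF g(1)] g(1) unfolding EG_eq by auto
  then have "\<not> matched M u" using e(3) unfolding matched_def g_def by simp
  from one_edge_ends_connected[OF u(1) this, of t]
  have u_mate: "(u, mate u) \<in> (adj (supp t - {e}) ends)\<^sup>*"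
    by (rule rtrancl_adj_mono) (use u(2) g(2) in blast)
  have "{hd (pv g), last (pv g)} = {u, mate u}"
    using path_of_EG(2)[OF g(1)] mate(1)[OF u(1)] u(2) by simp
  from rtrancl_adj_doubleton[OF this u_mate]
  have "(hd (pv g), last (pv g)) \<in> (adj (supp t - {e}) ends)\<^sup>*" .
  then show ?thesis
    using is_path_edge_on_cycle[OF path_of_EG(1)[OF g(1)] g(2) ab] path_in_supp[OF g(1)] by blast
qed

lemma kept_edge_on_cycle:
  assumes W: "W \<in> VG" and e: "e \<in> square_edges W" "kept M t e" and ab: "ends e = {a,b}"
  shows "(a,b) \<in> (adj (supp t - {e}) ends)\<^sup>*"
proof -
  define F where "F = supp t - {e}"
  obtain vs es where p: "is_path ends vs es" "set es = {e\<in>square_edges W. kept M t e}"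
    "set vs = W - {p. pendant M t p}" "\<not> matched M (hd vs)" "\<not> matched M (last vs)"
    by (rule square_kept_path[OF W])
  from is_path_hd_last[OF p(1)] have ends_W: "hd vs \<in> W" "last vs \<in> W" using p(3) by blast+
  then have ends_V0: "hd vs \<in> V0" "last vs \<in> V0" using VG_subset[OF W] by auto
  have exit: "(v, mate v) \<in> (adj F ends)\<^sup>*" if "v \<in> V0" for v
  proof -
    have "set (pe (one_edge v)) \<subseteq> F"
      using path_in_supp[OF one_edge(1)[OF that]]
        square_edge_not_on_path[OF e(1) one_edge(1)[OF that]]
      unfolding F_def by blast
    from ends_connected_by_path[OF one_edge(1)[OF that] this]
    show ?thesis unfolding mate(1)[OF that] by blast
  qed
  have "\<not> pendant M t (mate (hd vs))" "\<not> pendant M t (mate (last vs))"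
    using matched_mate ends_V0 p(4,5) pendant_matched by blast+
  from connected_avoiding_square[OF W mate(2)[OF ends_V0(1)] mate_outside_square[OF W ends_W(1)]
      this(1) mate(2)[OF ends_V0(2)] mate_outside_square[OF W ends_W(2)] this(2)]
  have "(mate (hd vs), mate (last vs)) \<in> (adj F ends)\<^sup>*"
    by (rule rtrancl_adj_mono) (use e(1) in \<open>auto simp: F_def\<close>)
  then have "(hd vs, last vs) \<in> (adj F ends)\<^sup>*"
    using rtrancl_trans[OF rtrancl_trans[OF exit[OF ends_V0(1)]]
        rtrancl_adj_sym[OF exit[OF ends_V0(2)]]]
    by blast
  moreover have "set es - {e} \<subseteq> F" using p(2) kept_in_supp unfolding F_def by blast
  moreover have "e \<in> set es" using p(2) e by blast
  ultimately show ?thesis using is_path_edge_on_cycle[OF p(1) _ ab] unfolding F_def by blast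
qed

lemma mult_two_ec: "two_ec_multigraph V E ends (mult M t)"
proof (rule two_ec_multigraphI[OF wf_graph])
  show "\<And>e. e \<notin> E \<Longrightarrow> mult M t e = 0" unfolding mult_def by simp
  show "\<And>u w. u \<in> V \<Longrightarrow> w \<in> V \<Longrightarrow> (u,w) \<in> (adj (supp t) ends)\<^sup>*" by (rule supp_connected)
  fix e a b assume e: "e \<in> E" "mult M t e = 1" and ab: "ends e = {a,b}"
  consider "x e = 1" "path_owner e \<notin> M" | "x e = 1/2" "kept M t e"
    using e x_cases[OF e(1)] unfolding mult_def by (auto split: if_splits)
  then show "(a,b) \<in> (adj (supp t - {e}) ends)\<^sup>*"
  proof cases
    case 1
    then show ?thesis using one_edge_on_cycle[OF e(1) 1 ab] by simp
  next
    case 2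
    then show ?thesis
      using kept_edge_on_cycle[OF square_of_edge[OF e(1) 2(1)] 2(2) ab] by simp
  qed
qed

lemma mult_one_edge: "e \<in> E \<Longrightarrow> x e = 1 \<Longrightarrow> mult M t e = (if path_owner e \<in> M then 2 else 1)"
  unfolding mult_def by simp

lemma mult_half_edge: "e \<in> E \<Longrightarrow> x e = 1/2 \<Longrightarrow> mult M t e = of_bool (kept M t e)"
  unfolding mult_def by simp

lemma mult_sum_H_edge:
  assumes e: "e \<in> E" "x e = 1/2" "e \<in> H"
  shows "real (mult M True e) + real (mult M False e) = 1"
proof -
  define W where "W = square_of_edge e"
  have W: "W \<in> VG" "e \<in> square_edges W" using square_of_edge[OF e(1,2)] unfolding W_def by auto
  show ?thesis
  proof (cases "\<exists>p\<in>W. matched M p")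
    case True
    then obtain p where p: "p \<in> W" "matched M p" by blast
    have "kept M True e \<longleftrightarrow> (if pendant M True p then p \<notin> ends0 e else p \<in> ends0 e)"
      "kept M False e \<longleftrightarrow> (if pendant M True p then p \<in> ends0 e else p \<notin> ends0 e)"
      using kept_matched[OF W p] e(3) pendant_flip[OF p(2), of True] by simp_all
    then show ?thesis unfolding mult_half_edge[OF e(1,2)] by simp
  next
    case False
    then have none: "\<forall>p\<in>W. \<not> matched M p" by blast
    have "e \<in> square_edges W \<inter> H" using W(2) e(3) by blast
    then have "e \<in> {dropped_H_edge True W, dropped_H_edge False W}"
      unfolding dropped_H_edge(1)[OF W(1)] .
    then show ?thesis
      unfolding mult_half_edge[OF e(1,2)] kept_unmatched[OF W none]
      using dropped_H_edge(2)[OF W(1)] by auto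
  qed
qed

lemma mult_sum_non_H_edge:
  assumes e: "e \<in> E" "x e = 1/2" "e \<notin> H" and uv: "ends0 e = {u,v}" "u \<noteq> v"
  shows "real (mult M True e) + real (mult M False e) =
    2 - of_bool (matched M u) - of_bool (matched M v)"
proof -
  define W where "W = square_of_edge e"
  have W: "W \<in> VG" "e \<in> square_edges W" using square_of_edge[OF e(1,2)] unfolding W_def by auto
  have uvW: "u \<in> W" "v \<in> W" using W(2) uv(1) unfolding square_edges_def by auto
  show ?thesis
  proof (cases "\<exists>p\<in>W. matched M p")
    case True
    then obtain p where p: "p \<in> W" "matched M p" by blast
    have kept: "kept M True e \<longleftrightarrow> (pendant M True p \<longrightarrow> p \<notin> {u,v})"
      "kept M False e \<longleftrightarrow> (\<not> pendant M True p \<longrightarrow> p \<notin> {u,v})"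
      using kept_matched[OF W p] e(3) pendant_flip[OF p(2), of True] uv(1) by simp_all
    have "matched M u \<longleftrightarrow> u = p" "matched M v \<longleftrightarrow> v = p"
      using matched_unique[OF W(1)] p uvW by blast+
    moreover consider "p = u" | "p = v" | "p \<notin> {u,v}" by blast
    ultimately show ?thesis
      unfolding mult_half_edge[OF e(1,2)] kept using uv(2) by cases auto
  next
    case False
    then have none: "\<forall>p\<in>W. \<not> matched M p" by blast
    have "dropped_H_edge t W \<in> H" for t using dropped_H_edge(1)[OF W(1)] by (cases t) auto
    then have "kept M t e" for t unfolding kept_unmatched[OF W none] using e(3) by metis
    then show ?thesis unfolding mult_half_edge[OF e(1,2)] using none uvW by simp
  qed
qed

end

context square_point
begin

lemma square_point_matchingI:
  "matching EG endsG M \<Longrightarrow> two_vertex_connected VG (EG - M) endsG \<Longrightarrow>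
   square_point_matching V0 E0 ends0 x0 V E ends x H pv pe M"
  by (intro square_point_matching.intro square_point_axioms square_point_matching_axioms.intro)

lemma r_vec_average:
  assumes Ms: "\<And>i. i < k \<Longrightarrow> matching EG endsG (Ms i) \<and> two_vertex_connected VG (EG - Ms i) endsG"
    and lam: "(\<Sum>i<k. lam i) = 1"
    and freq: "\<And>g. g \<in> EG \<Longrightarrow> (\<Sum>i<k. lam i * (if g \<in> Ms i then 1 else 0)) = \<alpha>"
    and e: "e \<in> E"
  shows "(\<Sum>i<k. lam i * (real (mult (Ms i) True e) + real (mult (Ms i) False e)) / 2) =
    r_vec \<alpha> x H e"
proof -
  note spm = square_point_matchingI[OF conjunct1[OF Ms] conjunct2[OF Ms]]
  consider "x e = 1" | "x e = 1/2" "e \<in> H" | "x e = 1/2" "e \<notin> H" using x_cases[OF e] by blast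
  then show ?thesis
  proof cases
    case 1
    have "(\<Sum>i<k. lam i * (real (mult (Ms i) True e) + real (mult (Ms i) False e)) / 2) =
      (\<Sum>i<k. lam i + lam i * (if path_owner e \<in> Ms i then 1 else 0))"
      using square_point_matching.mult_one_edge[OF spm e 1] by (intro sum.cong) auto
    then show ?thesis
      using 1 lam freq[OF path_owner(1)[OF e 1]] unfolding r_vec_def by (simp add: sum.distrib)
  next
    case 2
    have "(\<Sum>i<k. lam i * (real (mult (Ms i) True e) + real (mult (Ms i) False e)) / 2) =
      (\<Sum>i<k. lam i) / 2"
      using square_point_matching.mult_sum_H_edge[OF spm e 2]
      by (simp add: sum_divide_distrib)
    then show ?thesis using 2 lam unfolding r_vec_def by simp
  next
    case 3
    obtain u v where uv: "ends0 e = {u,v}" "u \<noteq> v" "u \<in> V0" "v \<in> V0"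
      using wf_graph0 half_edge(1)[OF e 3(1)] unfolding wf_graph_def card_2_iff by blast
    have "(\<Sum>i<k. lam i * (real (mult (Ms i) True e) + real (mult (Ms i) False e)) / 2) =
      (\<Sum>i<k. lam i - lam i * (if one_edge u \<in> Ms i then 1 else 0) / 2
         - lam i * (if one_edge v \<in> Ms i then 1 else 0) / 2)"
    proof (rule sum.cong)
      fix i assume "i \<in> {..<k}"
      then have avg: "real (mult (Ms i) True e) + real (mult (Ms i) False e) =
          2 - (if one_edge u \<in> Ms i then 1 else 0) - (if one_edge v \<in> Ms i then 1 else 0)"
        using square_point_matching.mult_sum_non_H_edge[OF spm e 3 uv(1,2)] uv(3,4)
        unfolding matched_def of_bool_def by simp
      show "lam i * (real (mult (Ms i) True e) + real (mult (Ms i) False e)) / 2 =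
          lam i - lam i * (if one_edge u \<in> Ms i then 1 else 0) / 2
            - lam i * (if one_edge v \<in> Ms i then 1 else 0) / 2"
        unfolding avg by (simp add: field_simps)
    qed simp
    then show ?thesis
      using 3 lam freq[OF one_edge(1)[OF uv(3)]] freq[OF one_edge(1)[OF uv(4)]]
      unfolding r_vec_def by (simp add: sum_subtractf flip: sum_divide_distrib)
  qed
qed

end

theorem lemma12:
  fixes V0 V :: "'v set" and E0 E :: "'e set"
    and ends0 ends :: "'e \<Rightarrow> 'v set" and x0 x :: "'e \<Rightarrow> real"
    and H :: "'e set" and \<alpha> :: real
  assumes bc: "boyd_carr_point V0 E0 ends0 x0"
    and sub: "subdivision V0 E0 ends0 x0 V E ends x"
    and ham: "hamiltonian_cycle V E ends H"
    and ones_in_H: "{e\<in>E. x e = 1} \<subseteq> H"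
    and opp: "\<forall>C\<in>half_squares E ends x. \<exists>e1 e2. e1 \<noteq> e2 \<and> C \<inter> H = {e1, e2} \<and>
                 ends e1 \<inter> ends e2 = {}"
    and alpha: "\<alpha> > 0"
    and P: "P_prop (contr_V E0 ends0 x0) (contr_E E0 x0) (contr_ends E0 ends0 x0) \<alpha>"
  shows "convex_comb_2ec V E ends (r_vec \<alpha> x H)"
proof -
  obtain k :: nat and lam Ms
    where Ms: "\<forall>i<k. lam i \<ge> 0 \<and> matching (contr_E E0 x0) (contr_ends E0 ends0 x0) (Ms i) \<and>
        two_vertex_connected (contr_V E0 ends0 x0) (contr_E E0 x0 - Ms i) (contr_ends E0 ends0 x0)"
    and lam: "(\<Sum>i<k. lam i) = 1"
    and freq: "\<forall>g\<in>contr_E E0 x0. (\<Sum>i<k. lam i * (if g \<in> Ms i then 1 else 0)) = \<alpha>"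
    using P unfolding P_prop_def by blast
  have "\<exists>pv pe. subdivision_paths V0 E0 ends0 x0 V E ends x pv pe"
    using sub unfolding subdivision_def subdivision_paths_def by (elim conjE)
  then obtain pv pe where "subdivision_paths V0 E0 ends0 x0 V E ends x pv pe" by blast
  then interpret square_point V0 E0 ends0 x0 V E ends x H pv pe
    using bc sub opp P_prop_card_ends[OF P alpha] by unfold_locales blast+
  show ?thesis
  proof (rule convex_comb_2ec_of_pairs)
    show "two_ec_multigraph V E ends (mult (Ms i) t)" if "i < k" for i t
      using square_point_matching.mult_two_ec[OF square_point_matchingI] Ms that by blast
    show "(\<Sum>i<k. lam i * (real (mult (Ms i) True e) + real (mult (Ms i) False e)) / 2) =
      r_vec \<alpha> x H e" if "e \<in> E" for e
      using Ms freq by (intro r_vec_average[OF _ lam _ that]) auto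
  qed (use Ms lam in auto)
qed

end
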